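(* Let $\mathcal{X}=\{1,\ldots,n\}$, let $p$ be a probability vector on $\mathcal{X}$ with all entries positive (the prior of $X$), with entries in non-increasing order $p_{[1]}\geq p_{[2]}\geq\cdots\geq p_{[n]}$, let $k<n$ be a positive integer and $l$ an integer with $1\leq l<k$. Then the maximum over all feasible channels of the posterior $l$-guess-error probability $H(X\mid Y)=\sum_{y:\,p(y)>0}p(y)\big(1-\sum_{i=1}^{l}(p_{X\mid y})_{[i]}\big)$ equals $$1-\max_{0\leq j\leq l}\Big\{\sum_{i=1}^{j}p_{[i]}+\Big(1-\sum_{i=1}^{j}p_{[i]}\Big)\frac{l-j}{k-j}\Big\}.$$
   Context: $q_{[i]}$ denotes the $i$-th largest entry of a vector $q$, and $p_{X\mid y}=(p(x\mid y))_{x\in\mathcal{X}}$. A channel is a discrete output set $\mathcal{Y}$ with conditional probabilities $p(y\mid x)\geq0$, $\sum_y p(y\mid x)=1$; $Y$ is its output when the input is $X\sim p$, with $p(y)=\sum_x p(x)p(y\mid x)$ and $p(x\mid y)=p(x)p(y\mid x)/p(y)$. The pre-image of $y$ is $\{x:p(y\mid x)>0\}$; the channel is feasible if every pre-image has at most $k$ elements. *)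

theory Defs
  imports "HOL-Analysis.Analysis"
begin

text \<open>Channels have output set nat (any discrete output set
with countably many used outputs embeds into nat); W x y = p(y|x).\<close>

definition top_sum :: "nat \<Rightarrow> nat \<Rightarrow> (nat \<Rightarrow> real) \<Rightarrow> real" where
  "top_sum n l q = sum_list (take l (rev (sort (map q [1..<Suc n]))))"

definition is_channel :: "nat \<Rightarrow> (nat \<Rightarrow> nat \<Rightarrow> real) \<Rightarrow> bool" where
  "is_channel n W \<longleftrightarrow> (\<forall>x\<in>{1..n}. (\<forall>y. W x y \<ge> 0) \<and> ((\<lambda>y. W x y) has_sum 1) UNIV)"

definition feasible :: "nat \<Rightarrow> nat \<Rightarrow> (nat \<Rightarrow> nat \<Rightarrow> real) \<Rightarrow> bool" where
  "feasible n k W \<longleftrightarrow> (\<forall>y. card {x\<in>{1..n}. W x y > 0} \<le> k)"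

definition out_prob :: "nat \<Rightarrow> (nat \<Rightarrow> real) \<Rightarrow> (nat \<Rightarrow> nat \<Rightarrow> real) \<Rightarrow> nat \<Rightarrow> real" where
  "out_prob n p W y = (\<Sum>x\<in>{1..n}. p x * W x y)"

definition posterior :: "nat \<Rightarrow> (nat \<Rightarrow> real) \<Rightarrow> (nat \<Rightarrow> nat \<Rightarrow> real) \<Rightarrow> nat \<Rightarrow> nat \<Rightarrow> real" where
  "posterior n p W y x = p x * W x y / out_prob n p W y"

definition guess_err :: "nat \<Rightarrow> nat \<Rightarrow> (nat \<Rightarrow> real) \<Rightarrow> (nat \<Rightarrow> nat \<Rightarrow> real) \<Rightarrow> real" where
  "guess_err n l p W = infsum (\<lambda>y. out_prob n p W y * (1 - top_sum n l (posterior n p W y)))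
                          {y. out_prob n p W y > 0}"

definition max_val :: "nat \<Rightarrow> nat \<Rightarrow> nat \<Rightarrow> (nat \<Rightarrow> real) \<Rightarrow> real" where
  "max_val n k l p = 1 - Max ((\<lambda>j. top_sum n j p + (1 - top_sum n j p) * (real l - real j) / (real k - real j)) ` {0..l})"

end

theory Submission
  imports Defs
begin

(* Fix a feasible channel, some j <= l and the set J of the j most likely inputs. At each output
   the posterior lives on at most k points, so guessing J together with the best l - j of the
   other points catches, by averaging, at least the fraction (l - j) / (k - j) of the posterior
   mass outside J. Summing over the outputs bounds the error by (1 - p(J)) (k - l) / (k - j),
   which is 1 minus the j-th term of the maximum.

   For a maximising j the ratio rho = (1 - p(J)) / (k - j) separates the entries outside J from
   those in J. Raising the entries outside J to total (k - j) rho and peeling off (k - j)-subsets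
   greedily writes them as a weighted sum of indicators of (k - j)-subsets B_y with weights w_y
   summing to rho. The channel whose output y has pre-image J together with B_y attains the bound. *)

section \<open>Top subsets\<close>

lemma finite_obtains_max:
  fixes f :: "'a \<Rightarrow> 'b::linorder"
  assumes "finite S" "S \<noteq> {}"
  obtains x where "x \<in> S" "\<And>y. y \<in> S \<Longrightarrow> f y \<le> f x"
proof -
  have "Max (f ` S) \<in> f ` S" using assms by simp
  then obtain x where "x \<in> S" "f x = Max (f ` S)" by auto
  then show ?thesis using assms by (intro that[of x]) auto
qed

lemma finite_obtains_min:
  fixes f :: "'a \<Rightarrow> 'b::linorder"
  assumes "finite S" "S \<noteq> {}"
  obtains x where "x \<in> S" "\<And>y. y \<in> S \<Longrightarrow> f x \<le> f y"
proof -
  have "Min (f ` S) \<in> f ` S" using assms by simp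
  then obtain x where "x \<in> S" "f x = Min (f ` S)" by auto
  then show ?thesis using assms by (intro that[of x]) auto
qed

definition top_subset :: "('a \<Rightarrow> real) \<Rightarrow> 'a set \<Rightarrow> 'a set \<Rightarrow> bool" where
  "top_subset q N T \<longleftrightarrow> T \<subseteq> N \<and> (\<forall>x\<in>T. \<forall>z\<in>N - T. q z \<le> q x)"

lemma exists_top_subset:
  assumes "finite N" "m \<le> card N"
  shows "\<exists>T. top_subset q N T \<and> card T = m"
  using assms(2)
proof (induction m)
  case 0
  show ?case by (intro exI[of _ "{}"]) (simp add: top_subset_def)
next
  case (Suc m)
  then obtain T where T: "top_subset q N T" "card T = m" by auto
  have "N - T \<noteq> {}"
    using T Suc.prems assms(1) card_mono[of N T] by (auto simp: top_subset_def)
  then obtain z where z: "z \<in> N - T" "\<And>u. u \<in> N - T \<Longrightarrow> q u \<le> q z"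
    using finite_obtains_max[of "N - T" q] assms(1) by blast
  have "top_subset q N (insert z T)" using T(1) z by (auto simp: top_subset_def)
  moreover have "card (insert z T) = Suc m"
    using T z assms(1) finite_subset by (fastforce simp: top_subset_def)
  ultimately show ?case by blast
qed

lemma sum_le_top_subset:
  assumes N: "finite N" and T: "top_subset q N T" and T': "T' \<subseteq> N" "card T' \<le> card T"
    and nonneg: "\<forall>x\<in>N. 0 \<le> q x"
  shows "sum q T' \<le> sum q T"
proof -
  have fin: "finite T" "finite T'" using N T T' finite_subset by (auto simp: top_subset_def)
  have card_le: "card (T' - T) \<le> card (T - T')"
    using fin T'(2) by (simp add: card_Diff_subset_Int Int_commute)
  have "sum q (T' - T) \<le> sum q (T - T')"
  proof (cases "T' - T = {}")
    case True
    have "0 \<le> sum q (T - T')" using nonneg T by (intro sum_nonneg) (auto simp: top_subset_def)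
    then show ?thesis unfolding True by simp
  next
    case False
    then obtain z where z: "z \<in> T' - T" "\<And>u. u \<in> T' - T \<Longrightarrow> q u \<le> q z"
      using finite_obtains_max[of "T' - T" q] fin by blast
    have "sum q (T' - T) \<le> real (card (T' - T)) * q z"
      using z by (intro sum_bounded_above) simp
    also have "\<dots> \<le> real (card (T - T')) * q z"
      using card_le z(1) T'(1) nonneg by (intro mult_right_mono) auto
    also have "\<dots> \<le> sum q (T - T')"
      using z(1) T' T by (intro sum_bounded_below) (auto simp: top_subset_def)
    finally show ?thesis .
  qed
  moreover have "sum q T' = sum q (T' \<inter> T) + sum q (T' - T)"
    using fin by (simp add: sum.Int_Diff)
  moreover have "sum q T = sum q (T' \<inter> T) + sum q (T - T')"
    using fin by (metis Int_commute sum.Int_Diff)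
  ultimately show ?thesis by linarith
qed

lemma card_mult_sum_le_top_subset:
  assumes fin: "finite B" and T: "top_subset v B T" and nonneg: "\<forall>x\<in>B. 0 \<le> v x"
  shows "real (card T) * sum v B \<le> real (card B) * sum v T"
proof (cases "T = {}")
  case False
  have T_sub: "T \<subseteq> B" and finT: "finite T" using T fin finite_subset by (auto simp: top_subset_def)
  obtain z where z: "z \<in> T" "\<And>u. u \<in> T \<Longrightarrow> v z \<le> v u"
    using finite_obtains_min[of T v] finT False by blast
  have low: "real (card T) * v z \<le> sum v T"
    using z by (intro sum_bounded_below) simp
  have high: "sum v (B - T) \<le> real (card (B - T)) * v z"
    using z(1) T by (intro sum_bounded_above) (auto simp: top_subset_def)
  have "real (card T) * sum v (B - T) \<le> real (card (B - T)) * sum v T"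
    using mult_left_mono[OF high, of "real (card T)"] mult_left_mono[OF low, of "real (card (B - T))"]
    by (simp add: algebra_simps)
  moreover have "real (card B) = real (card T) + real (card (B - T))"
    using fin T_sub by (simp add: card_Diff_subset finT card_mono)
  moreover have "sum v B = sum v T + sum v (B - T)"
    using fin T_sub by (metis add.commute sum.subset_diff)
  ultimately show ?thesis by (simp add: algebra_simps)
qed simp

lemma exists_subset_sum_ge_fraction:
  assumes fin: "finite B" and nonneg: "\<forall>x\<in>B. 0 \<le> v x"
    and c: "0 \<le> c" "c \<le> 1" "c * real (card B) \<le> real m"
  shows "\<exists>B'\<subseteq>B. card B' \<le> m \<and> c * sum v B \<le> sum v B'"
proof (cases "card B \<le> m")
  case True
  have "c * sum v B \<le> sum v B" using c nonneg by (simp add: mult_left_le_one_le sum_nonneg)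
  then show ?thesis using True by blast
next
  case False
  then obtain B' where B': "top_subset v B B'" "card B' = m"
    using exists_top_subset[OF fin, of m v] by auto
  have "c * sum v B * real (card B) = (c * real (card B)) * sum v B" by simp
  also have "\<dots> \<le> real (card B') * sum v B"
    using c(3) B'(2) nonneg by (intro mult_right_mono sum_nonneg) auto
  also have "\<dots> \<le> real (card B) * sum v B'"
    by (rule card_mult_sum_le_top_subset[OF fin B'(1) nonneg])
  finally have "c * sum v B \<le> sum v B'" using False by (simp add: mult.commute)
  then show ?thesis using B' by (auto simp: top_subset_def)
qed

lemma top_subset_Max_rest:
  assumes "finite N" "top_subset q N T" "N - T \<noteq> {}"
  shows "\<forall>x\<in>N - T. q x \<le> Max (q ` (N - T))" and "\<forall>x\<in>T. Max (q ` (N - T)) \<le> q x"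
  using assms by (auto simp: top_subset_def)

section \<open>Sums of the largest entries\<close>

lemma top_sum_eq_sum_top_subset:
  "\<exists>T. top_subset q {1..n} T \<and> card T = min l n \<and> top_sum n l q = sum q T"
proof -
  define xs where "xs = rev (sort_key q [1..<Suc n])"
  have sorted: "sort (map q [1..<Suc n]) = map q (rev xs)"
    unfolding xs_def by (rule properties_for_sort) (simp_all add: mset_map)
  have xs: "distinct xs" "set xs = {1..n}" "length xs = n"
    by (auto simp: xs_def)
  have desc: "sorted_wrt (\<lambda>x y. q y \<le> q x) xs"
    unfolding xs_def by (simp add: sorted_wrt_rev sorted_wrt_map[symmetric])
  define T where "T = set (take l xs)"
  have "top_sum n l q = sum_list (map q (take l xs))"
    unfolding top_sum_def sorted by (simp add: rev_map take_map)
  then have "top_sum n l q = sum q T"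
    using xs(1) by (simp add: T_def sum_list_distinct_conv_sum_set)
  moreover have "card T = min l n" using xs by (simp add: T_def distinct_card)
  moreover have "top_subset q {1..n} T"
  proof -
    have split: "xs = take l xs @ drop l xs" by simp
    then have "set (drop l xs) = {1..n} - T"
      using xs(1,2) distinct_append[of "take l xs" "drop l xs"] set_append[of "take l xs" "drop l xs"]
      unfolding T_def by auto
    moreover have "sorted_wrt (\<lambda>x y. q y \<le> q x) (take l xs @ drop l xs)" using desc by simp
    ultimately show ?thesis
      using xs(2) set_take_subset[of l xs] unfolding top_subset_def T_def sorted_wrt_append by auto
  qed
  ultimately show ?thesis by blast
qed

lemma obtain_top_subset_top_sum:
  assumes "j \<le> n"
  obtains J where "top_subset p {1..n} J" "J \<subseteq> {1..n}" "card J = j" "top_sum n j p = sum p J"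
proof -
  obtain J where J: "top_subset p {1..n} J" "card J = min j n" "top_sum n j p = sum p J"
    using top_sum_eq_sum_top_subset by blast
  show ?thesis using that[OF J(1) _ _ J(3)] J(1,2) assms by (simp add: top_subset_def)
qed

lemma sum_le_top_sum:
  assumes "\<forall>x\<in>{1..n}. 0 \<le> q x" "T \<subseteq> {1..n}" "card T \<le> l"
  shows "sum q T \<le> top_sum n l q"
proof -
  obtain T0 where T0: "top_subset q {1..n} T0" "card T0 = min l n" "top_sum n l q = sum q T0"
    using top_sum_eq_sum_top_subset by blast
  have "card T \<le> n" using assms(2) by (metis card_atLeastAtMost card_mono diff_Suc_1 finite_atLeastAtMost)
  then show ?thesis using sum_le_top_subset[OF _ T0(1) assms(2) _ assms(1)] T0(2,3) assms(3) by simp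
qed

lemma top_sum_attained: "\<exists>T. T \<subseteq> {1..n} \<and> card T \<le> l \<and> top_sum n l q = sum q T"
  using top_sum_eq_sum_top_subset[of q n l] by (metis min.cobounded1 top_subset_def)

lemma top_sum_nonneg_le_sum:
  assumes "\<forall>x\<in>{1..n}. 0 \<le> q x"
  shows "0 \<le> top_sum n l q" and "top_sum n l q \<le> sum q {1..n}"
proof -
  obtain T where T: "T \<subseteq> {1..n}" "top_sum n l q = sum q T"
    using top_sum_attained by blast
  show "0 \<le> top_sum n l q" using T assms by (auto intro: sum_nonneg)
  show "top_sum n l q \<le> sum q {1..n}" using T assms by (auto intro: sum_mono2)
qed

lemma top_sum_scale:
  assumes "0 \<le> c" "\<forall>x\<in>{1..n}. 0 \<le> q x"
  shows "top_sum n l (\<lambda>x. c * q x) = c * top_sum n l q"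
proof (rule antisym)
  have cq: "\<forall>x\<in>{1..n}. 0 \<le> c * q x" using assms by simp
  obtain T where T: "T \<subseteq> {1..n}" "card T \<le> l" "top_sum n l (\<lambda>x. c * q x) = (\<Sum>x\<in>T. c * q x)"
    using top_sum_attained by blast
  then show "top_sum n l (\<lambda>x. c * q x) \<le> c * top_sum n l q"
    using sum_le_top_sum[OF assms(2) T(1,2)] assms(1) by (simp add: sum_distrib_left[symmetric] mult_left_mono)
  obtain T' where T': "T' \<subseteq> {1..n}" "card T' \<le> l" "top_sum n l q = sum q T'"
    using top_sum_attained by blast
  then show "c * top_sum n l q \<le> top_sum n l (\<lambda>x. c * q x)"
    using sum_le_top_sum[OF cq T'(1,2)] by (simp add: sum_distrib_left)
qed

lemma out_prob_mult_top_sum_posterior: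
  assumes "0 < out_prob n p W y" "\<forall>x\<in>{1..n}. 0 \<le> p x \<and> 0 \<le> W x y"
  shows "out_prob n p W y * top_sum n l (posterior n p W y) = top_sum n l (\<lambda>x. p x * W x y)"
proof -
  have "posterior n p W y = (\<lambda>x. (1 / out_prob n p W y) * (p x * W x y))"
    by (simp add: posterior_def fun_eq_iff)
  then have "top_sum n l (posterior n p W y) = 1 / out_prob n p W y * top_sum n l (\<lambda>x. p x * W x y)"
    using assms by (simp only:) (rule top_sum_scale, auto)
  then show ?thesis using assms(1) by simp
qed

section \<open>The converse bound\<close>

lemma fraction_mult_le:
  fixes a j l k :: nat
  assumes "a \<le> j" "j \<le> l" "l < k"
  shows "(real l - real j) / (real k - real j) * (real k - real a) \<le> real l - real a"
proof -
  have "(real l - real j) * (real k - real a) + (real k - real l) * (real j - real a)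
      = (real l - real a) * (real k - real j)" by (simp add: algebra_simps)
  moreover have "0 \<le> (real k - real l) * (real j - real a)" using assms by simp
  ultimately have "(real l - real j) * (real k - real a) \<le> (real l - real a) * (real k - real j)"
    by linarith
  moreover have "0 < real k - real j" using assms by simp
  ultimately show ?thesis by (simp add: pos_divide_le_eq)
qed

lemma sum_plus_fraction_le_top_sum:
  assumes nonneg: "\<forall>x\<in>{1..n}. 0 \<le> v x" and supp: "card {x\<in>{1..n}. 0 < v x} \<le> k"
    and J: "J \<subseteq> {1..n}" "card J = j" and "j \<le> l" "l < k"
  shows "sum v J + (real l - real j) / (real k - real j) * sum v ({1..n} - J) \<le> top_sum n l v"
proof -
  define S where "S = {x\<in>{1..n}. 0 < v x}"
  define c where "c = (real l - real j) / (real k - real j)"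
  have fin: "finite S" "finite (S \<inter> J)" "finite (S - J)" by (simp_all add: S_def)
  have zero: "v x = 0" if "x \<in> {1..n} - S" for x using that nonneg by (force simp: S_def)
  have "\<forall>x\<in>J - S \<inter> J. v x = 0" using J(1) zero by blast
  then have vJ: "sum v J = sum v (S \<inter> J)"
    using J(1) by (intro sum.mono_neutral_right) (auto intro: finite_subset)
  have "\<forall>x\<in>({1..n} - J) - (S - J). v x = 0" by (intro ballI zero) blast
  moreover have "S - J \<subseteq> {1..n} - J" by (auto simp: S_def)
  ultimately have vR: "sum v ({1..n} - J) = sum v (S - J)"
    by (intro sum.mono_neutral_right) simp_all
  have "finite J" using J(1) finite_subset by blast
  then have card_A: "card (S \<inter> J) \<le> j" using card_mono[of J "S \<inter> J"] J(2) by auto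
  have c: "0 \<le> c" "c \<le> 1" using \<open>j \<le> l\<close> \<open>l < k\<close> by (auto simp: c_def divide_simps)
  have "card (S \<inter> J) + card (S - J) \<le> k"
    using fin supp by (metis S_def card_Int_Diff)
  then have "c * real (card (S - J)) \<le> c * (real k - real (card (S \<inter> J)))"
    using c(1) by (intro mult_left_mono) auto
  also have "\<dots> \<le> real l - real (card (S \<inter> J))"
    unfolding c_def by (rule fraction_mult_le[OF card_A \<open>j \<le> l\<close> \<open>l < k\<close>])
  finally have c_card: "c * real (card (S - J)) \<le> real (l - card (S \<inter> J))"
    using card_A \<open>j \<le> l\<close> by (simp add: of_nat_diff)
  have "\<forall>x\<in>S - J. 0 \<le> v x" using nonneg by (auto simp: S_def)
  then obtain B' where B': "B' \<subseteq> S - J" "card B' \<le> l - card (S \<inter> J)" "c * sum v (S - J) \<le> sum v B'"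
    using exists_subset_sum_ge_fraction[OF fin(3) _ c c_card] by blast
  have disj: "(S \<inter> J) \<inter> B' = {}" using B'(1) by blast
  have finB': "finite B'" using B'(1) fin(3) finite_subset by blast
  have "card ((S \<inter> J) \<union> B') \<le> l"
    using card_Un_le[of "S \<inter> J" B'] B'(2) card_A \<open>j \<le> l\<close> by linarith
  moreover have "(S \<inter> J) \<union> B' \<subseteq> {1..n}" using B'(1) by (auto simp: S_def)
  ultimately have "sum v ((S \<inter> J) \<union> B') \<le> top_sum n l v" using sum_le_top_sum[OF nonneg] by blast
  then have "sum v (S \<inter> J) + sum v B' \<le> top_sum n l v"
    using disj finB' fin by (simp add: sum.union_disjoint)
  then show ?thesis using vJ vR B'(3) by (simp add: c_def)
qed

lemma output_guess_loss_le:
  assumes ppos: "\<forall>x\<in>{1..n}. 0 < p x" and W: "\<forall>x\<in>{1..n}. 0 \<le> W x y"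
    and supp: "card {x\<in>{1..n}. 0 < W x y} \<le> k" and J: "J \<subseteq> {1..n}" "card J = j"
    and "j \<le> l" "l < k" and P: "0 < out_prob n p W y"
  shows "out_prob n p W y * (1 - top_sum n l (posterior n p W y))
    \<le> (1 - (real l - real j) / (real k - real j)) * (\<Sum>x\<in>{1..n} - J. p x * W x y)"
proof -
  define c where "c = (real l - real j) / (real k - real j)"
  define q where "q x = p x * W x y" for x
  have q_nonneg: "\<forall>x\<in>{1..n}. 0 \<le> q x" using ppos W by (simp add: q_def less_imp_le)
  have "0 < q x \<longleftrightarrow> 0 < W x y" if "x \<in> {1..n}" for x
    using ppos[rule_format, OF that] by (simp add: q_def zero_less_mult_iff)
  then have "{x\<in>{1..n}. 0 < q x} = {x\<in>{1..n}. 0 < W x y}" by blast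
  then have "sum q J + c * sum q ({1..n} - J) \<le> top_sum n l q"
    unfolding c_def using sum_plus_fraction_le_top_sum[OF q_nonneg _ J] supp \<open>j \<le> l\<close> \<open>l < k\<close> by simp
  moreover have "out_prob n p W y * top_sum n l (posterior n p W y) = top_sum n l q"
    unfolding q_def using P ppos W by (intro out_prob_mult_top_sum_posterior) (auto simp: less_imp_le)
  moreover have "out_prob n p W y = sum q J + sum q ({1..n} - J)"
    using J(1) by (simp add: out_prob_def q_def sum.subset_diff)
  ultimately show ?thesis by (simp add: c_def q_def algebra_simps)
qed

lemma has_sum_sum_finite:
  fixes f :: "'a \<Rightarrow> 'b \<Rightarrow> real"
  assumes "finite A" "\<And>a. a \<in> A \<Longrightarrow> (f a has_sum s a) B"
  shows "((\<lambda>b. \<Sum>a\<in>A. f a b) has_sum sum s A) B"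
  using assms by (induction A rule: finite_induct) (auto intro: has_sum_add)

lemma guess_err_le_of_subset:
  assumes ppos: "\<forall>x\<in>{1..n}. 0 < p x" and psum: "(\<Sum>x\<in>{1..n}. p x) = 1"
    and ch: "is_channel n W" and fe: "feasible n k W"
    and J: "J \<subseteq> {1..n}" "card J = j" and "j \<le> l" "l < k"
  shows "guess_err n l p W \<le> (1 - (real l - real j) / (real k - real j)) * (1 - sum p J)"
proof -
  define c where "c = (real l - real j) / (real k - real j)"
  define P where "P = out_prob n p W"
  define H where "H = (\<lambda>y. (1 - c) * (\<Sum>x\<in>{1..n} - J. p x * W x y))"
  have c1: "c \<le> 1" using \<open>j \<le> l\<close> \<open>l < k\<close> by (simp add: c_def divide_simps)
  have W: "\<And>x. x \<in> {1..n} \<Longrightarrow> (\<forall>y. 0 \<le> W x y) \<and> ((\<lambda>y. W x y) has_sum 1) UNIV"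
    using ch by (simp add: is_channel_def)
  have H_sum: "(H has_sum ((1 - c) * (1 - sum p J))) UNIV"
  proof -
    have "((\<lambda>y. p x * W x y) has_sum p x * 1) UNIV" if "x \<in> {1..n}" for x
      using W[OF that] by (intro has_sum_cmult_right) auto
    then have "((\<lambda>y. \<Sum>x\<in>{1..n} - J. p x * W x y) has_sum (\<Sum>x\<in>{1..n} - J. p x)) UNIV"
      by (intro has_sum_sum_finite) auto
    moreover have "(\<Sum>x\<in>{1..n} - J. p x) = 1 - sum p J" using psum J(1) by (simp add: sum_diff)
    ultimately show ?thesis unfolding H_def by (simp add: has_sum_cmult_right)
  qed
  have H_nonneg: "0 \<le> H y" for y
    unfolding H_def using c1 ppos W by (intro mult_nonneg_nonneg sum_nonneg) (auto simp: less_imp_le)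
  have loss_le: "P y * (1 - top_sum n l (posterior n p W y)) \<le> H y" if "0 < P y" for y
    unfolding P_def H_def c_def using fe W that
    by (intro output_guess_loss_le[OF ppos _ _ J \<open>j \<le> l\<close> \<open>l < k\<close>]) (auto simp: feasible_def P_def)
  show ?thesis
  proof (cases "(\<lambda>y. P y * (1 - top_sum n l (posterior n p W y))) summable_on {y. 0 < P y}")
    case True
    then have "guess_err n l p W \<le> infsum H UNIV"
      unfolding guess_err_def P_def[symmetric]
      by (rule infsum_mono_neutral) (use H_sum H_nonneg loss_le in \<open>auto simp: has_sum_iff\<close>)
    then show ?thesis using H_sum by (simp add: has_sum_iff c_def mult.commute)
  next
    case False
    \<comment> \<open>junk value: the infinite sum of a non-summable family is \<open>0\<close>\<close>
    then have "guess_err n l p W = 0" unfolding guess_err_def P_def by (rule infsum_not_exists)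
    moreover have "sum p J \<le> 1"
      using psum sum_mono2[of "{1..n}" J p] J(1) ppos by (force simp: less_imp_le)
    ultimately show ?thesis using c1 by (simp add: c_def)
  qed
qed

section \<open>Decomposition into subsets of a fixed size\<close>

lemma exists_majorant_with_sum:
  assumes fin: "finite R" and card: "m \<le> card R" and p_le: "\<forall>x\<in>R. p x \<le> s" and "0 \<le> s"
    and sum_le: "sum p R \<le> real m * s"
  shows "\<exists>r. (\<forall>x\<in>R. p x \<le> r x \<and> r x \<le> s) \<and> sum r R = real m * s"
proof -
  define \<theta> where "\<theta> = (real m * s - sum p R) / (real (card R) * s - sum p R)"
  define r where "r x = p x + \<theta> * (s - p x)" for x
  have ms_le: "real m * s \<le> real (card R) * s" using card \<open>0 \<le> s\<close> by (simp add: mult_right_mono)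
  have \<theta>: "0 \<le> \<theta>" "\<theta> \<le> 1" using sum_le ms_le by (auto simp: \<theta>_def divide_le_eq_1)
  have "sum r R = sum p R + \<theta> * (real (card R) * s - sum p R)"
    by (simp add: r_def sum.distrib sum_distrib_left[symmetric] sum_subtractf)
  also have "\<dots> = real m * s"
    \<comment> \<open>if the denominator of \<open>\<theta>\<close> vanishes, so does the numerator, and \<open>\<theta> = 0\<close> as \<open>x / 0 = 0\<close>\<close>
    using sum_le ms_le by (cases "real (card R) * s = sum p R") (simp_all add: \<theta>_def)
  finally have "sum r R = real m * s" .
  moreover have "p x \<le> r x \<and> r x \<le> s" if "x \<in> R" for x
    using p_le that \<theta> mult_left_le_one_le[of "s - p x" \<theta>] by (simp add: r_def)
  ultimately show ?thesis by blast
qed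

lemma top_subset_bounds:
  assumes fin: "finite N" and r: "\<forall>x\<in>N. 0 \<le> r x \<and> r x \<le> s" and sum_r: "sum r N = real m * s"
    and "0 < s" and B: "top_subset r N B" "card B = m"
  shows "\<forall>x\<in>B. 0 < r x" and "\<forall>z\<in>N - B. r z < s"
proof -
  have B_sub: "B \<subseteq> N" and finB: "finite B" using B fin finite_subset by (auto simp: top_subset_def)
  have split: "sum r N = sum r B + sum r (N - B)" using fin B_sub by (metis add.commute sum.subset_diff)
  show "\<forall>x\<in>B. 0 < r x"
  proof (rule ccontr)
    assume "\<not> (\<forall>x\<in>B. 0 < r x)"
    then obtain x0 where x0: "x0 \<in> B" "r x0 \<le> 0" by auto
    have "r z = 0" if "z \<in> N - B" for z
      using B(1) x0 r that unfolding top_subset_def by (meson DiffD1 order.antisym order.trans)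
    then have "sum r (N - B) = 0" by simp
    moreover have "r x0 = 0" using x0 B_sub r by (meson order.antisym subsetD)
    ultimately have "sum r N = sum r (B - {x0})" using split x0(1) finB by (simp add: sum.remove)
    also have "\<dots> \<le> real (card (B - {x0})) * s" using r B_sub by (intro sum_bounded_above) auto
    also have "\<dots> < real m * s"
      using card_Diff1_less[OF finB x0(1)] B(2) \<open>0 < s\<close> by (intro mult_strict_right_mono) auto
    finally show False using sum_r by simp
  qed
  show "\<forall>z\<in>N - B. r z < s"
  proof (rule ccontr)
    assume "\<not> (\<forall>z\<in>N - B. r z < s)"
    then obtain z0 where z0: "z0 \<in> N - B" "s \<le> r z0" by auto
    have "r x = s" if "x \<in> B" for x
      using B(1) z0 r that unfolding top_subset_def by (meson DiffD1 order.antisym order.trans subsetD)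
    then have "\<forall>x\<in>B. r x = s" by blast
    then have "sum r B = real m * s" using B(2) by simp
    moreover have "s \<le> sum r (N - B)"
      using z0 r fin by (intro order.trans[OF z0(2)] member_le_sum) auto
    ultimately show False using split sum_r \<open>0 < s\<close> by linarith
  qed
qed

lemma peel_decreases_level_counts:
  fixes r :: "'a \<Rightarrow> real"
  assumes fin: "finite N" and "B \<subseteq> N" "0 < t" and pos: "\<forall>x\<in>B. 0 < r x" and lt: "\<forall>z\<in>N - B. r z < s"
    and hit: "(\<exists>x\<in>B. r x = t) \<or> (\<exists>z\<in>N - B. s - r z = t)"
  shows "card {x\<in>N. r x - t * indicator B x \<noteq> 0} + card {x\<in>N. r x - t * indicator B x \<noteq> s - t}
    < card {x\<in>N. r x \<noteq> 0} + card {x\<in>N. r x \<noteq> s}"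
proof -
  define r' where "r' x = r x - t * indicator B x" for x
  have sub: "{x\<in>N. r' x \<noteq> 0} \<subseteq> {x\<in>N. r x \<noteq> 0}" "{x\<in>N. r' x \<noteq> s - t} \<subseteq> {x\<in>N. r x \<noteq> s}"
    using pos lt by (auto simp: r'_def indicator_def)
  have fin': "finite {x\<in>N. r x \<noteq> 0}" "finite {x\<in>N. r x \<noteq> s}" using fin by simp_all
  from hit have "card {x\<in>N. r' x \<noteq> 0} < card {x\<in>N. r x \<noteq> 0} \<or>
      card {x\<in>N. r' x \<noteq> s - t} < card {x\<in>N. r x \<noteq> s}"
  proof
    assume "\<exists>x\<in>B. r x = t"
    then obtain x0 where "x0 \<in> B" "r x0 = t" by blast
    then have "x0 \<in> {x\<in>N. r x \<noteq> 0} - {x\<in>N. r' x \<noteq> 0}"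
      using \<open>B \<subseteq> N\<close> \<open>0 < t\<close> by (auto simp: r'_def)
    then show ?thesis using psubset_card_mono[OF fin'(1)] sub(1) by blast
  next
    assume "\<exists>z\<in>N - B. s - r z = t"
    then obtain z0 where "z0 \<in> N - B" "s - r z0 = t" by blast
    then have "z0 \<in> {x\<in>N. r x \<noteq> s} - {x\<in>N. r' x \<noteq> s - t}"
      using \<open>0 < t\<close> by (auto simp: r'_def)
    then show ?thesis using psubset_card_mono[OF fin'(2)] sub(2) by blast
  qed
  then show ?thesis unfolding r'_def[symmetric]
    using card_mono[OF fin'(1) sub(1)] card_mono[OF fin'(2) sub(2)] by linarith
qed

lemma peel_step:
  assumes fin: "finite N" and "1 \<le> m" and r: "\<forall>x\<in>N. 0 \<le> r x \<and> r x \<le> s"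
    and sum_r: "sum r N = real m * s" and "0 < s"
  obtains B t where "B \<subseteq> N" "card B = m" "0 < t"
    "\<forall>x\<in>N. 0 \<le> r x - t * indicator B x \<and> r x - t * indicator B x \<le> s - t"
    "(\<Sum>x\<in>N. r x - t * indicator B x) = real m * (s - t)"
    "card {x\<in>N. r x - t * indicator B x \<noteq> 0} + card {x\<in>N. r x - t * indicator B x \<noteq> s - t}
      < card {x\<in>N. r x \<noteq> 0} + card {x\<in>N. r x \<noteq> s}"
proof -
  have "real m * s \<le> real (card N) * s" using sum_r r sum_bounded_above[of N r s] by auto
  then obtain B where B: "top_subset r N B" "card B = m"
    using exists_top_subset[OF fin] \<open>0 < s\<close> by auto
  have B_sub: "B \<subseteq> N" using B(1) by (simp add: top_subset_def)
  have pos: "\<forall>x\<in>B. 0 < r x" and lt: "\<forall>z\<in>N - B. r z < s"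
    using top_subset_bounds[OF fin r sum_r \<open>0 < s\<close> B] by blast+
  \<comment> \<open>Lower the top entries by the largest \<open>t\<close> that keeps every entry in \<open>[0, s - t]\<close>:
    then an entry of \<open>B\<close> drops to \<open>0\<close> or an entry outside \<open>B\<close> reaches the new level \<open>s - t\<close>.\<close>
  define D where "D = r ` B \<union> (\<lambda>z. s - r z) ` (N - B)"
  define t where "t = Min D"
  have D: "finite D" "D \<noteq> {}" using fin B_sub B(2) \<open>1 \<le> m\<close> by (auto simp: D_def intro: finite_subset)
  have t_pos: "0 < t" using D pos lt by (auto simp: t_def D_def)
  have t_le: "\<forall>x\<in>B. t \<le> r x" "\<forall>z\<in>N - B. t \<le> s - r z" using D by (auto simp: t_def D_def)
  define r' where "r' x = r x - t * indicator B x" for x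
  have "0 \<le> r' x \<and> r' x \<le> s - t" if "x \<in> N" for x
    using r t_le(1) t_le(2)[rule_format, of x] that by (cases "x \<in> B") (auto simp: r'_def)
  moreover have "(\<Sum>x\<in>N. r' x) = real m * (s - t)"
  proof -
    have "{x\<in>N. x \<in> B} = B" using B_sub by blast
    then have "(\<Sum>x\<in>N. t * indicator B x) = t * real m" using fin B(2) by simp
    then show ?thesis using sum_r by (simp add: r'_def sum_subtractf algebra_simps)
  qed
  moreover have "t \<in> D" using D by (simp add: t_def)
  then have "card {x\<in>N. r' x \<noteq> 0} + card {x\<in>N. r' x \<noteq> s - t} < card {x\<in>N. r x \<noteq> 0} + card {x\<in>N. r x \<noteq> s}"
    unfolding r'_def using peel_decreases_level_counts[OF fin B_sub t_pos pos lt] by (auto simp: D_def)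
  ultimately show ?thesis using that B_sub B(2) t_pos unfolding r'_def by blast
qed

lemma exists_decomposition_into_subsets:
  assumes fin: "finite N" and "1 \<le> m" and "\<forall>x\<in>N. 0 \<le> r x \<and> r x \<le> s" and "sum r N = real m * s"
  shows "\<exists>(M::nat) w B. (\<forall>i<M. 0 \<le> w i \<and> B i \<subseteq> N \<and> card (B i) = m) \<and> (\<Sum>i<M. w i) = s
    \<and> (\<forall>x\<in>N. r x = (\<Sum>i<M. if x \<in> B i then w i else 0))"
  using assms(3,4)
proof (induction "card {x\<in>N. r x \<noteq> 0} + card {x\<in>N. r x \<noteq> s}" arbitrary: r s rule: less_induct)
  case less
  show ?case
  proof (cases "0 < s")
    case False
    have "r x = 0" if "x \<in> N" for x using less.prems(1)[rule_format, OF that] False by linarith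
    moreover have "s = 0" using calculation less.prems(2) \<open>1 \<le> m\<close> by simp
    ultimately show ?thesis by (intro exI[of _ 0]) simp
  next
    case True
    obtain B t where step: "B \<subseteq> N" "card B = m" "0 < t"
      "\<forall>x\<in>N. 0 \<le> r x - t * indicator B x \<and> r x - t * indicator B x \<le> s - t"
      "(\<Sum>x\<in>N. r x - t * indicator B x) = real m * (s - t)"
      "card {x\<in>N. r x - t * indicator B x \<noteq> 0} + card {x\<in>N. r x - t * indicator B x \<noteq> s - t}
        < card {x\<in>N. r x \<noteq> 0} + card {x\<in>N. r x \<noteq> s}"
      by (rule peel_step[OF fin \<open>1 \<le> m\<close> less.prems True])
    obtain M :: nat and w B' where IH: "\<forall>i<M. 0 \<le> w i \<and> B' i \<subseteq> N \<and> card (B' i) = m" "(\<Sum>i<M. w i) = s - t"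
      "\<forall>x\<in>N. r x - t * indicator B x = (\<Sum>i<M. if x \<in> B' i then w i else 0)"
      using less.hyps[OF step(6) step(4,5)] by blast
    define w' where "w' = w(M := t)"
    define B'' where "B'' = B'(M := B)"
    have "(\<Sum>i<M. w' i) = (\<Sum>i<M. w i)" "\<And>x. (\<Sum>i<M. if x \<in> B'' i then w' i else 0) = (\<Sum>i<M. if x \<in> B' i then w i else 0)"
      by (auto simp: w'_def B''_def intro!: sum.cong)
    then have "(\<forall>i<Suc M. 0 \<le> w' i \<and> B'' i \<subseteq> N \<and> card (B'' i) = m) \<and> (\<Sum>i<Suc M. w' i) = s
      \<and> (\<forall>x\<in>N. r x = (\<Sum>i<Suc M. if x \<in> B'' i then w' i else 0))"
      using IH step(1-3) by (auto simp: less_Suc_eq w'_def B''_def indicator_def split: if_splits)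
    then show ?thesis by blast
  qed
qed

section \<open>Channels built from a decomposition\<close>

lemma is_channel_finite_outputs:
  assumes "\<forall>x\<in>{1..n}. \<forall>y. 0 \<le> W x y" "\<forall>x\<in>{1..n}. \<forall>y\<ge>M. W x y = 0"
    and "\<forall>x\<in>{1..n}. (\<Sum>y<M. W x y) = 1"
  shows "is_channel n W"
proof -
  have "((\<lambda>y. W x y) has_sum 1) UNIV" if "x \<in> {1..n}" for x
    using assms that by (intro has_sum_finite_neutralI[of "{..<M}"]) (auto simp: not_less)
  then show ?thesis using assms(1) by (simp add: is_channel_def)
qed

lemma guess_err_finite_outputs:
  assumes p: "\<forall>x\<in>{1..n}. 0 \<le> p x" "(\<Sum>x\<in>{1..n}. p x) = 1"
    and W: "\<forall>x\<in>{1..n}. \<forall>y. 0 \<le> W x y" "\<forall>x\<in>{1..n}. \<forall>y\<ge>M. W x y = 0"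
      "\<forall>x\<in>{1..n}. (\<Sum>y<M. W x y) = 1"
  shows "guess_err n l p W = 1 - (\<Sum>y<M. top_sum n l (\<lambda>x. p x * W x y))"
proof -
  define P where "P = out_prob n p W"
  define Y where "Y = {y. 0 < P y}"
  have P_nonneg: "0 \<le> P y" for y
    unfolding P_def out_prob_def using p W by (intro sum_nonneg mult_nonneg_nonneg) auto
  have P_zero: "P y = 0" if "M \<le> y" for y using W(2) that by (simp add: P_def out_prob_def)
  have Y_sub: "Y \<subseteq> {..<M}"
  proof
    fix y assume "y \<in> Y"
    then have "0 < P y" by (simp add: Y_def)
    then show "y \<in> {..<M}" using P_zero[of y] by (cases "M \<le> y") auto
  qed
  have finY: "finite Y" using finite_subset[OF Y_sub] by simp
  have top_zero: "top_sum n l (\<lambda>x. p x * W x y) = 0" if "P y = 0" for y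
    using top_sum_nonneg_le_sum[of n "\<lambda>x. p x * W x y" l] p(1) W(1) that
    by (simp add: P_def out_prob_def)
  have P_sum: "(\<Sum>y<M. P y) = 1"
  proof -
    have "(\<Sum>y<M. P y) = (\<Sum>x\<in>{1..n}. p x * (\<Sum>y<M. W x y))"
      unfolding P_def out_prob_def by (simp add: sum.swap[of _ "{..<M}"] sum_distrib_left)
    then show ?thesis using p(2) W(3) by simp
  qed
  have "guess_err n l p W = (\<Sum>y\<in>Y. P y * (1 - top_sum n l (posterior n p W y)))"
    unfolding guess_err_def P_def[symmetric] Y_def[symmetric] using finY by (rule infsum_finite)
  also have "\<dots> = (\<Sum>y\<in>Y. P y - top_sum n l (\<lambda>x. p x * W x y))"
  proof (rule sum.cong[OF refl])
    fix y assume "y \<in> Y"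
    then have "P y * top_sum n l (posterior n p W y) = top_sum n l (\<lambda>x. p x * W x y)"
      unfolding P_def using p(1) W(1) by (intro out_prob_mult_top_sum_posterior) (auto simp: Y_def P_def)
    then show "P y * (1 - top_sum n l (posterior n p W y)) = P y - top_sum n l (\<lambda>x. p x * W x y)"
      by (simp add: algebra_simps)
  qed
  also have "\<dots> = (\<Sum>y<M. P y - top_sum n l (\<lambda>x. p x * W x y))"
    using Y_sub P_nonneg top_zero by (intro sum.mono_neutral_left) (auto simp: Y_def order_less_le)
  also have "\<dots> = 1 - (\<Sum>y<M. top_sum n l (\<lambda>x. p x * W x y))"
    using P_sum by (simp add: sum_subtractf)
  finally show ?thesis .
qed

locale layered_channel =
  fixes n m :: nat and p :: "nat \<Rightarrow> real" and J :: "nat set" and s :: real and r :: "nat \<Rightarrow> real"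
    and M :: nat and w :: "nat \<Rightarrow> real" and B :: "nat \<Rightarrow> nat set"
  assumes J_sub: "J \<subseteq> {1..n}" and s_pos: "0 < s" and p_ge_s: "\<forall>x\<in>J. s \<le> p x"
    and p_le_r: "\<forall>x\<in>{1..n} - J. 0 < p x \<and> p x \<le> r x"
    and layers: "\<forall>y<M. 0 \<le> w y \<and> B y \<subseteq> {1..n} - J \<and> card (B y) = m"
    and w_sum: "(\<Sum>y<M. w y) = s"
    and r_decomp: "\<forall>x\<in>{1..n} - J. r x = (\<Sum>y<M. if x \<in> B y then w y else 0)"
begin

definition W :: "nat \<Rightarrow> nat \<Rightarrow> real" where
  "W x y = (if y < M \<and> x \<in> J then w y / s else if y < M \<and> x \<in> B y then w y / r x else 0)"

lemma r_pos: "x \<in> {1..n} - J \<Longrightarrow> 0 < r x"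
  using p_le_r by force

lemma finite_B: "y < M \<Longrightarrow> finite (B y)"
  using layers by (meson finite_Diff finite_atLeastAtMost finite_subset)

lemma W_nonneg: "0 \<le> W x y"
proof (cases "y < M \<and> x \<notin> J \<and> x \<in> B y")
  case True
  then have "0 < r x" using layers by (intro r_pos) blast
  then show ?thesis using True layers by (simp add: W_def)
next
  case False
  then show ?thesis using layers s_pos by (auto simp: W_def)
qed

lemma W_vanishes: "M \<le> y \<Longrightarrow> W x y = 0"
  by (simp add: W_def)

lemma W_sum:
  assumes "x \<in> {1..n}"
  shows "(\<Sum>y<M. W x y) = 1"
proof (cases "x \<in> J")
  case True
  then show ?thesis using w_sum s_pos by (simp add: W_def sum_divide_distrib[symmetric])
next
  case False
  then have "(\<Sum>y<M. W x y) = (\<Sum>y<M. (if x \<in> B y then w y else 0) / r x)"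
    by (intro sum.cong) (auto simp: W_def)
  also have "\<dots> = (\<Sum>y<M. if x \<in> B y then w y else 0) / r x"
    by (rule sum_divide_distrib[symmetric])
  also have "\<dots> = 1" using False assms r_decomp p_le_r by force
  finally show ?thesis .
qed

lemma W_feasible: "feasible n (card J + m) W"
  unfolding feasible_def
proof
  fix y
  have "{x\<in>{1..n}. 0 < W x y} \<subseteq> (if y < M then J \<union> B y else {})"
    by (auto simp: W_def split: if_splits)
  moreover have "finite (if y < M then J \<union> B y else {})"
    using J_sub finite_B by (auto intro: finite_subset)
  moreover have "card (if y < M then J \<union> B y else {}) \<le> card J + m"
    using layers card_Un_le[of J "B y"] by auto
  ultimately show "card {x\<in>{1..n}. 0 < W x y} \<le> card J + m"
    by (meson card_mono order_trans)
qed

lemma joint_mass_le: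
  assumes "y < M"
  shows "p x * W x y \<le> w y * (if x \<in> J then p x / s else 1)"
proof -
  have w: "0 \<le> w y" using layers assms by simp
  have "p x * (w y / r x) \<le> w y" if "x \<in> B y"
  proof -
    have R: "x \<in> {1..n} - J" using that layers assms by blast
    then have "p x * w y \<le> r x * w y" using p_le_r w by (intro mult_right_mono) auto
    then show ?thesis using r_pos[OF R] by (simp add: field_simps)
  qed
  then show ?thesis using w assms by (auto simp: W_def mult.commute)
qed

text \<open>On \<open>J\<close> the joint mass \<open>p x * W x y\<close> is at least \<open>w y\<close> and outside \<open>J\<close> at most \<open>w y\<close>,
  so swapping a member of \<open>J\<close> for another input never helps a guess.\<close>

lemma joint_top_sum_le:
  assumes "y < M" "card J \<le> l"
  shows "top_sum n l (\<lambda>x. p x * W x y) \<le> w y * (sum p J / s + (real l - real (card J)))"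
proof -
  obtain T where T: "T \<subseteq> {1..n}" "card T \<le> l" "top_sum n l (\<lambda>x. p x * W x y) = (\<Sum>x\<in>T. p x * W x y)"
    using top_sum_attained by blast
  have finT: "finite T" and finJ: "finite J" using finite_subset[OF T(1)] finite_subset[OF J_sub] by auto
  have w: "0 \<le> w y" using layers assms(1) by simp
  have "(\<Sum>x\<in>T. p x * W x y) \<le> (\<Sum>x\<in>T. w y * (if x \<in> J then p x / s else 1))"
    using joint_mass_le[OF assms(1)] by (rule sum_mono)
  also have "\<dots> = (\<Sum>x\<in>T \<inter> J. w y * (p x / s)) + (\<Sum>x\<in>T - J. w y)"
    unfolding sum.Int_Diff[OF finT, of _ J] by (intro arg_cong2[where f = "(+)"] sum.cong) auto
  also have "\<dots> = w y * (sum p (T \<inter> J) / s + real (card (T - J)))"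
  proof -
    have "(\<Sum>x\<in>T \<inter> J. w y * (p x / s)) = w y * (sum p (T \<inter> J) / s)"
      by (simp add: sum_distrib_left sum_divide_distrib)
    then show ?thesis by (simp add: distrib_left mult.commute)
  qed
  also have "\<dots> \<le> w y * (sum p J / s + (real l - real (card J)))"
  proof -
    have "real (card (J - T)) * s \<le> sum p (J - T)" using p_ge_s by (intro sum_bounded_below) auto
    moreover have "sum p J = sum p (T \<inter> J) + sum p (J - T)"
      using sum.Int_Diff[OF finJ, of p T] by (simp add: Int_commute)
    ultimately have "sum p (T \<inter> J) / s \<le> sum p J / s - real (card (J - T))"
      using s_pos by (simp add: field_simps)
    moreover have "card T + card (J - T) = card J + card (T - J)"
      using card_Int_Diff[OF finT, of J] card_Int_Diff[OF finJ, of T] by (simp add: Int_commute)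
    ultimately show ?thesis using w T(2) by (intro mult_left_mono) linarith+
  qed
  finally show ?thesis using T(3) by simp
qed

lemma guess_err_ge:
  assumes "(\<Sum>x\<in>{1..n}. p x) = 1" "card J \<le> l"
  shows "1 - sum p J - (real l - real (card J)) * s \<le> guess_err n l p W"
proof -
  have p_nonneg: "\<forall>x\<in>{1..n}. 0 \<le> p x"
    using p_ge_s s_pos p_le_r by (metis DiffI less_eq_real_def order.trans)
  have "(\<Sum>y<M. top_sum n l (\<lambda>x. p x * W x y)) \<le> (\<Sum>y<M. w y * (sum p J / s + (real l - real (card J))))"
    using joint_top_sum_le assms(2) by (intro sum_mono) auto
  also have "\<dots> = s * (sum p J / s + (real l - real (card J)))"
    using w_sum by (simp add: sum_distrib_right[symmetric])
  also have "\<dots> = sum p J + (real l - real (card J)) * s"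
    using s_pos by (simp add: field_simps)
  finally have "(\<Sum>y<M. top_sum n l (\<lambda>x. p x * W x y)) \<le> sum p J + (real l - real (card J)) * s" .
  moreover have "guess_err n l p W = 1 - (\<Sum>y<M. top_sum n l (\<lambda>x. p x * W x y))"
    by (rule guess_err_finite_outputs[OF p_nonneg assms(1)]) (simp_all add: W_nonneg W_vanishes W_sum)
  ultimately show ?thesis by linarith
qed

end

lemma exists_channel_guess_err_ge:
  assumes ppos: "\<forall>x\<in>{1..n}. 0 < p x" and psum: "(\<Sum>x\<in>{1..n}. p x) = 1"
    and J: "J \<subseteq> {1..n}" "card J = j" and "j < k" "k \<le> n" "j \<le> l" and "0 < s"
    and le_s: "\<forall>x\<in>{1..n} - J. p x \<le> s" and ge_s: "\<forall>x\<in>J. s \<le> p x"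
    and rest: "sum p ({1..n} - J) \<le> (real k - real j) * s"
  shows "\<exists>W. is_channel n W \<and> feasible n k W \<and> 1 - sum p J - (real l - real j) * s \<le> guess_err n l p W"
proof -
  define R where "R = {1..n} - J"
  have finR: "finite R" by (simp add: R_def)
  have card_R: "k - j \<le> card R" using J \<open>k \<le> n\<close> by (simp add: R_def card_Diff_subset finite_subset)
  have sum_R: "sum p R \<le> real (k - j) * s" using rest \<open>j < k\<close> by (simp add: R_def of_nat_diff)
  obtain r where r: "\<forall>x\<in>R. p x \<le> r x \<and> r x \<le> s" "sum r R = real (k - j) * s"
    using exists_majorant_with_sum[OF finR card_R _ _ sum_R] le_s \<open>0 < s\<close> by (auto simp: R_def)
  have "0 \<le> r x \<and> r x \<le> s" if "x \<in> R" for x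
    using r(1) ppos that unfolding R_def by (meson DiffD1 less_eq_real_def order.trans)
  moreover have "1 \<le> k - j" using \<open>j < k\<close> by simp
  ultimately obtain M :: nat and w B where wB: "\<forall>y<M. 0 \<le> w y \<and> B y \<subseteq> R \<and> card (B y) = k - j"
      "(\<Sum>y<M. w y) = s" "\<forall>x\<in>R. r x = (\<Sum>y<M. if x \<in> B y then w y else 0)"
    using exists_decomposition_into_subsets[OF finR _ _ r(2)] by blast
  interpret layered_channel n "k - j" p J s r M w B
    using J(1) \<open>0 < s\<close> ge_s ppos r(1) wB by unfold_locales (auto simp: R_def)
  have "is_channel n W" using W_nonneg W_vanishes W_sum by (intro is_channel_finite_outputs) auto
  moreover have "feasible n k W" using W_feasible J(2) \<open>j < k\<close> by simp
  moreover have "1 - sum p J - (real l - real j) * s \<le> guess_err n l p W"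
    using guess_err_ge[OF psum] J(2) \<open>j \<le> l\<close> by simp
  ultimately show ?thesis by blast
qed

section \<open>Optimising the size of the top set\<close>

definition guess_bound :: "nat \<Rightarrow> nat \<Rightarrow> nat \<Rightarrow> (nat \<Rightarrow> real) \<Rightarrow> nat \<Rightarrow> real" where
  "guess_bound n k l p j = top_sum n j p + (1 - top_sum n j p) * (real l - real j) / (real k - real j)"

definition residual_ratio :: "nat \<Rightarrow> nat \<Rightarrow> (nat \<Rightarrow> real) \<Rightarrow> nat \<Rightarrow> real" where
  "residual_ratio n k p j = (1 - top_sum n j p) / (real k - real j)"

lemma max_val_eq_Max_guess_bound: "max_val n k l p = 1 - Max (guess_bound n k l p ` {0..l})"
  unfolding max_val_def guess_bound_def ..

lemma guess_bound_eq_residual_ratio: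
  "j < k \<Longrightarrow> guess_bound n k l p j = 1 - (real k - real l) * residual_ratio n k p j"
  by (simp add: guess_bound_def residual_ratio_def field_simps)

lemma guess_err_le_guess_bound:
  assumes ppos: "\<forall>x\<in>{1..n}. 0 < p x" and psum: "(\<Sum>x\<in>{1..n}. p x) = 1"
    and "is_channel n W" "feasible n k W" "j \<le> l" "l < k" "k \<le> n"
  shows "guess_err n l p W \<le> 1 - guess_bound n k l p j"
proof -
  have "j \<le> n" using assms(5-7) by simp
  then obtain J where J: "J \<subseteq> {1..n}" "card J = j" "top_sum n j p = sum p J"
    using obtain_top_subset_top_sum by blast
  have "guess_err n l p W \<le> (1 - (real l - real j) / (real k - real j)) * (1 - sum p J)"
    using guess_err_le_of_subset[OF ppos psum assms(3,4) J(1,2)] assms(5,6) by blast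
  also have "\<dots> = 1 - guess_bound n k l p j"
    using assms(5,6) by (simp add: guess_bound_def J(3) field_simps)
  finally show ?thesis .
qed

lemma residual_ratio_minimal:
  assumes "l < k" "j \<le> l" "i \<le> l" and "guess_bound n k l p i \<le> guess_bound n k l p j"
  shows "residual_ratio n k p j \<le> residual_ratio n k p i"
proof -
  have "(real k - real l) * residual_ratio n k p j \<le> (real k - real l) * residual_ratio n k p i"
    using assms guess_bound_eq_residual_ratio[of i k n l p] guess_bound_eq_residual_ratio[of j k n l p] by simp
  then show ?thesis using assms(1) by (simp add: mult_le_cancel_left_pos)
qed

lemma residual_ratio_le_entry:
  assumes p: "\<forall>x\<in>{1..n}. 0 \<le> p x" and J: "J \<subseteq> {1..n}" "card J = j" "top_sum n j p = sum p J"
    and "j < k" and le_prev: "residual_ratio n k p j \<le> residual_ratio n k p (j - 1)" and "x \<in> J"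
  shows "residual_ratio n k p j \<le> p x"
proof -
  define \<rho> where "\<rho> = residual_ratio n k p j"
  have finJ: "finite J" using finite_subset[OF J(1)] by simp
  have j: "1 \<le> j" using J(2) \<open>x \<in> J\<close> finJ by (metis One_nat_def Suc_leI card_gt_0_iff empty_iff)
  have "sum p (J - {x}) \<le> top_sum n (j - 1) p"
    using J \<open>x \<in> J\<close> finJ by (intro sum_le_top_sum[OF p]) auto
  then have "1 - top_sum n (j - 1) p \<le> 1 - sum p J + p x"
    using sum_diff1[of J p x] finJ \<open>x \<in> J\<close> by simp
  moreover have "\<rho> * (real k - real j + 1) \<le> 1 - top_sum n (j - 1) p"
    using le_prev j \<open>j < k\<close> by (simp add: \<rho>_def residual_ratio_def of_nat_diff pos_le_divide_eq algebra_simps)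
  moreover have "\<rho> * (real k - real j) = 1 - sum p J"
    using \<open>j < k\<close> by (simp add: \<rho>_def residual_ratio_def J(3))
  ultimately show ?thesis unfolding \<rho>_def[symmetric] by (simp add: algebra_simps)
qed

lemma entry_le_residual_ratio:
  assumes p: "\<forall>x\<in>{1..n}. 0 \<le> p x" and J: "J \<subseteq> {1..n}" "card J = j" "top_sum n j p = sum p J"
    and "j + 1 < k" and le_next: "residual_ratio n k p j \<le> residual_ratio n k p (j + 1)"
    and "x \<in> {1..n} - J"
  shows "p x \<le> residual_ratio n k p j"
proof -
  define \<rho> where "\<rho> = residual_ratio n k p j"
  have finJ: "finite J" using finite_subset[OF J(1)] by simp
  have "sum p (insert x J) \<le> top_sum n (j + 1) p"
    using J \<open>x \<in> {1..n} - J\<close> finJ by (intro sum_le_top_sum[OF p]) auto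
  then have "1 - top_sum n (j + 1) p \<le> 1 - sum p J - p x"
    using finJ \<open>x \<in> {1..n} - J\<close> by simp
  moreover have "\<rho> * (real k - real j - 1) \<le> 1 - top_sum n (j + 1) p"
    using le_next \<open>j + 1 < k\<close> by (simp add: \<rho>_def residual_ratio_def pos_le_divide_eq algebra_simps)
  moreover have "\<rho> * (real k - real j) = 1 - sum p J"
    using \<open>j + 1 < k\<close> by (simp add: \<rho>_def residual_ratio_def J(3))
  ultimately show ?thesis unfolding \<rho>_def[symmetric] by (simp add: algebra_simps)
qed

lemma residual_ratio_pos:
  assumes ppos: "\<forall>x\<in>{1..n}. 0 < p x" and psum: "(\<Sum>x\<in>{1..n}. p x) = 1"
    and J: "J \<subseteq> {1..n}" "card J = j" "top_sum n j p = sum p J" and "j < k" "j < n"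
  shows "{1..n} - J \<noteq> {}" and "0 < residual_ratio n k p j"
proof -
  show "{1..n} - J \<noteq> {}"
  proof
    assume "{1..n} - J = {}"
    then have "card {1..n} \<le> card J" using finite_subset[OF J(1)] by (intro card_mono) auto
    then show False using J(2) \<open>j < n\<close> by simp
  qed
  then obtain z where z: "z \<in> {1..n} - J" by blast
  have "0 < sum p ({1..n} - J)"
    by (rule sum_pos2[OF _ z]) (use ppos z in \<open>auto simp: less_imp_le\<close>)
  then show "0 < residual_ratio n k p j"
    using psum J(1,3) \<open>j < k\<close> by (simp add: residual_ratio_def sum_diff)
qed

lemma exists_channel_attaining_guess_bound:
  assumes ppos: "\<forall>x\<in>{1..n}. 0 < p x" and psum: "(\<Sum>x\<in>{1..n}. p x) = 1"
    and "l < k" "k < n" "j \<le> l"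
    and max: "\<forall>i\<le>l. guess_bound n k l p i \<le> guess_bound n k l p j"
  shows "\<exists>W. is_channel n W \<and> feasible n k W \<and> 1 - guess_bound n k l p j \<le> guess_err n l p W"
proof -
  define \<rho> where "\<rho> = residual_ratio n k p j"
  have p: "\<forall>x\<in>{1..n}. 0 \<le> p x" using ppos by (simp add: less_imp_le)
  have min_ratio: "\<rho> \<le> residual_ratio n k p i" if "i \<le> l" for i
    unfolding \<rho>_def by (intro residual_ratio_minimal[OF assms(3,5) that]) (use max that in blast)
  have "j < k" "j < n" using assms(3-5) by simp_all
  then obtain J where J: "top_subset p {1..n} J" "J \<subseteq> {1..n}" "card J = j" "top_sum n j p = sum p J"
    using obtain_top_subset_top_sum[of j n p] by auto
  note rest_ne = residual_ratio_pos(1)[OF ppos psum J(2-4) \<open>j < k\<close> \<open>j < n\<close>]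
  have \<rho>_pos: "0 < \<rho>" unfolding \<rho>_def by (rule residual_ratio_pos(2)[OF ppos psum J(2-4) \<open>j < k\<close> \<open>j < n\<close>])
  have rest_sum: "sum p ({1..n} - J) = (real k - real j) * \<rho>"
    using psum J(2,4) \<open>j < k\<close> by (simp add: \<rho>_def residual_ratio_def sum_diff)
  note Max_rest = top_subset_Max_rest[OF finite_atLeastAtMost J(1) rest_ne]
  \<comment> \<open>For \<open>j < l\<close> this is \<open>\<rho>\<close> itself; for \<open>j = l\<close> only its position between the entries matters.\<close>
  define s where "s = max \<rho> (Max (p ` ({1..n} - J)))"
  have le_s: "\<forall>x\<in>{1..n} - J. p x \<le> s" using Max_rest(1) by (auto simp: s_def le_max_iff_disj)
  have "\<rho> \<le> p x" if "x \<in> J" for x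
    using residual_ratio_le_entry[OF p J(2-4) \<open>j < k\<close> _ that] min_ratio[of "j - 1"] assms(5) by (simp add: \<rho>_def)
  then have ge_s: "\<forall>x\<in>J. s \<le> p x" using Max_rest(2) by (simp add: s_def)
  have same_loss: "(real l - real j) * s = (real l - real j) * \<rho>"
  proof (cases "j < l")
    case True
    have "\<forall>x\<in>{1..n} - J. p x \<le> \<rho>"
      using entry_le_residual_ratio[OF p J(2-4)] min_ratio[of "j + 1"] True assms(3) by (simp add: \<rho>_def)
    then have "s = \<rho>" using rest_ne by (simp add: s_def Max_le_iff)
    then show ?thesis by simp
  qed (use assms(5) in simp)
  have "sum p ({1..n} - J) \<le> (real k - real j) * s" "0 < s"
    using rest_sum \<rho>_pos \<open>j < k\<close> by (simp_all add: s_def)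
  then obtain W where W: "is_channel n W" "feasible n k W"
    "1 - sum p J - (real l - real j) * s \<le> guess_err n l p W"
    using exists_channel_guess_err_ge[OF ppos psum J(2,3) \<open>j < k\<close> _ \<open>j \<le> l\<close> _ le_s ge_s] assms(4) by auto
  have "1 - guess_bound n k l p j = 1 - sum p J - (real l - real j) * s"
    using same_loss rest_sum psum J(2) \<open>j < k\<close>
    by (simp add: guess_bound_eq_residual_ratio \<rho>_def[symmetric] sum_diff algebra_simps)
  then show ?thesis using W by auto
qed

theorem corollary2:
  fixes n k l :: nat and p :: "nat \<Rightarrow> real"
  assumes "\<forall>x\<in>{1..n}. p x > 0" and "(\<Sum>x\<in>{1..n}. p x) = 1"
    and "0 < k" and "k < n" and "1 \<le> l" and "l < k"
  shows "(\<forall>W. is_channel n W \<and> feasible n k W \<longrightarrow> guess_err n l p W \<le> max_val n k l p)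
       \<and> (\<exists>W. is_channel n W \<and> feasible n k W \<and> guess_err n l p W = max_val n k l p)"
proof -
  have "Max (guess_bound n k l p ` {0..l}) \<in> guess_bound n k l p ` {0..l}" by simp
  then obtain j where j: "j \<le> l" "guess_bound n k l p j = Max (guess_bound n k l p ` {0..l})"
    by fastforce
  then have max_val: "max_val n k l p = 1 - guess_bound n k l p j"
    by (simp add: max_val_eq_Max_guess_bound)
  have j_max: "\<forall>i\<le>l. guess_bound n k l p i \<le> guess_bound n k l p j"
    unfolding j(2) by simp
  have upper: "\<forall>W. is_channel n W \<and> feasible n k W \<longrightarrow> guess_err n l p W \<le> max_val n k l p"
    using guess_err_le_guess_bound[OF assms(1,2)] j(1) max_val assms(4,6) by simp
  obtain W where "is_channel n W" "feasible n k W" "max_val n k l p \<le> guess_err n l p W"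
    using exists_channel_attaining_guess_bound[OF assms(1,2,6,4) j(1) j_max] max_val by auto
  with upper show ?thesis by (meson order.antisym)
qed

end
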